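(* (Extended Perron's method.) Let $\Omega\subset\mathbb{R}^N$ be an open domain, let $g:\mathbb{R}^N\setminus\Omega\to\mathbb{R}$ be bounded, and let $\mathcal{A}:\mathbb{R}^N\times\mathcal{X}\times\mathbb{R}\to\mathbb{R}$ satisfy assumptions (a), (b), (c) below. Consider the DPP $\mathcal{A}(x,u,u(x))=0$ for $x\in\Omega$, $u=g$ on $\mathbb{R}^N\setminus\Omega$. Assume (H1) there exists at least one viscosity subsolution and (H2) all viscosity subsolutions are uniformly bounded from above. Let $\underline{S}$ be the set of all viscosity subsolutions. Then the function $$\overline{u}(x)=\sup_{v\in\underline{S}}v(x)\ \ (x\in\Omega),\qquad \overline{u}(x)=g(x)\ \ (x\in\mathbb{R}^N\setminus\Omega)$$ is a viscosity solution of the DPP. Respectively, if (H1* ) there exists at least one viscosity supersolution and (H2* ) all viscosity supersolutions are uniformly bounded from below, and $\overline{S}$ is the set of all viscosity supersolutions, then $\underline{u}(x)=\inf_{v\in\overline{S}}v(x)$ for $x\in\Omega$, $\underline{u}=g$ on $\mathbb{R}^N\setminus\Omega$, is a viscosity solution of the DPP.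
   Context: $\overline{\mathcal{X}}$ is the set of bounded functions $\mathbb{R}^N\to\mathbb{R}$, $\mathcal{X}\subset\overline{\mathcal{X}}$ a fixed subset. Assumptions: (a) $\varphi_1\le\varphi_2$ implies $\mathcal{A}(x,\varphi_2,s)\le\mathcal{A}(x,\varphi_1,s)$; (b) $s_1\le s_2$ implies $\mathcal{A}(x,\varphi,s_1)\le\mathcal{A}(x,\varphi,s_2)$; (c) for every $(x,\varphi)$ the map $s\mapsto\mathcal{A}(x,\varphi,s)$ has exactly one zero. $u\in\overline{\mathcal{X}}$ is a viscosity supersolution of the DPP if $u\ge g$ on $\mathbb{R}^N\setminus\Omega$ and, for each $x\in\Omega$, $\mathcal{A}(x,\varphi,u(x))\ge0$ for all $\varphi\in\mathcal{X}$ with $\varphi\le u$; a viscosity subsolution if $u\le g$ on $\mathbb{R}^N\setminus\Omega$ and, for each $x\in\Omega$, $\mathcal{A}(x,\varphi,u(x))\le0$ for all $\varphi\in\mathcal{X}$ with $\varphi\ge u$; a viscosity solution is a $u\in\overline{\mathcal{X}}$ that is both. *)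

theory Defs
  imports "HOL-Analysis.Analysis"
begin

definition Xbar :: "('a \<Rightarrow> real) set" where
  "Xbar = {u. bounded (range u)}"

definition visc_super ::
  "('a \<Rightarrow> real) set \<Rightarrow> ('a \<Rightarrow> ('a \<Rightarrow> real) \<Rightarrow> real \<Rightarrow> real) \<Rightarrow> 'a set \<Rightarrow> ('a \<Rightarrow> real)
   \<Rightarrow> ('a \<Rightarrow> real) \<Rightarrow> bool" where
  "visc_super X A \<Omega> g u \<longleftrightarrow> u \<in> Xbar \<and> (\<forall>x\<in>-\<Omega>. g x \<le> u x) \<and>
     (\<forall>x\<in>\<Omega>. \<forall>\<phi>\<in>X. \<phi> \<le> u \<longrightarrow> 0 \<le> A x \<phi> (u x))"

definition visc_sub ::
  "('a \<Rightarrow> real) set \<Rightarrow> ('a \<Rightarrow> ('a \<Rightarrow> real) \<Rightarrow> real \<Rightarrow> real) \<Rightarrow> 'a set \<Rightarrow> ('a \<Rightarrow> real)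
   \<Rightarrow> ('a \<Rightarrow> real) \<Rightarrow> bool" where
  "visc_sub X A \<Omega> g u \<longleftrightarrow> u \<in> Xbar \<and> (\<forall>x\<in>-\<Omega>. u x \<le> g x) \<and>
     (\<forall>x\<in>\<Omega>. \<forall>\<phi>\<in>X. u \<le> \<phi> \<longrightarrow> A x \<phi> (u x) \<le> 0)"

definition visc_sol ::
  "('a \<Rightarrow> real) set \<Rightarrow> ('a \<Rightarrow> ('a \<Rightarrow> real) \<Rightarrow> real \<Rightarrow> real) \<Rightarrow> 'a set \<Rightarrow> ('a \<Rightarrow> real)
   \<Rightarrow> ('a \<Rightarrow> real) \<Rightarrow> bool" where
  "visc_sol X A \<Omega> g u \<longleftrightarrow> visc_super X A \<Omega> g u \<and> visc_sub X A \<Omega> g u"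

end

theory Submission
  imports Defs "HOL-Library.Function_Algebras"
begin

text \<open>The supremum of all subsolutions is a subsolution: where it violated the subsolution
  inequality, the unique zero of the operator would lie strictly below it, hence below some
  subsolution, whose own inequality forces it to equal that zero. Being the largest subsolution,
  it is also a supersolution: where the supersolution inequality fails, raising its value at that
  single point up to the zero of the operator would, by the monotonicity assumptions (a) and (b),
  give a larger subsolution. The infimum of supersolutions reduces to this case through the
  symmetry \<open>u \<mapsto> -u\<close>, \<open>A(x, \<phi>, s) \<mapsto> -A(x, -\<phi>, -s)\<close>, which exchanges sub- and
  supersolutions.\<close>

definition perron_sup :: "('a \<Rightarrow> real) set \<Rightarrow> 'a set \<Rightarrow> ('a \<Rightarrow> real) \<Rightarrow> 'a \<Rightarrow> real" where
  "perron_sup S \<Omega> g x = (if x \<in> \<Omega> then SUP v\<in>S. v x else g x)"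

definition perron_inf :: "('a \<Rightarrow> real) set \<Rightarrow> 'a set \<Rightarrow> ('a \<Rightarrow> real) \<Rightarrow> 'a \<Rightarrow> real" where
  "perron_inf S \<Omega> g x = (if x \<in> \<Omega> then INF v\<in>S. v x else g x)"

definition dual_operator :: "('a \<Rightarrow> ('a \<Rightarrow> real) \<Rightarrow> real \<Rightarrow> real) \<Rightarrow> 'a \<Rightarrow> ('a \<Rightarrow> real) \<Rightarrow> real \<Rightarrow> real"
  where "dual_operator A x \<phi> s = - A x (- \<phi>) (- s)"

lemma perron_inf_eq_uminus_perron_sup:
  "perron_inf S \<Omega> g = - perron_sup (uminus ` S) \<Omega> (- g)"
  by (auto simp: perron_inf_def perron_sup_def Inf_real_def image_image)

lemma Xbar_uminus_iff [simp]: "- u \<in> Xbar \<longleftrightarrow> u \<in> Xbar"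
  using uminus_bounded_comp[of u UNIV] by (simp add: Xbar_def fun_Compl_def)

lemma Xbar_fun_upd: "u \<in> Xbar \<Longrightarrow> u(x := c) \<in> Xbar"
  unfolding Xbar_def by (auto intro: bounded_subset[of "insert c (range u)"])

lemma visc_super_iff_visc_sub_dual:
  "visc_super X A \<Omega> g u \<longleftrightarrow> visc_sub (uminus ` X) (dual_operator A) \<Omega> (- g) (- u)"
  by (simp add: visc_super_def visc_sub_def dual_operator_def)

lemma visc_sub_iff_visc_super_dual:
  "visc_sub X A \<Omega> g u \<longleftrightarrow> visc_super (uminus ` X) (dual_operator A) \<Omega> (- g) (- u)"
  by (simp add: visc_super_def visc_sub_def dual_operator_def)

lemma visc_sol_iff_visc_sol_dual:
  "visc_sol X A \<Omega> g u \<longleftrightarrow> visc_sol (uminus ` X) (dual_operator A) \<Omega> (- g) (- u)"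
  unfolding visc_sol_def by (metis visc_super_iff_visc_sub_dual visc_sub_iff_visc_super_dual)

lemma perron_sup_upper:
  assumes "v \<in> S" and "\<And>w. w \<in> S \<Longrightarrow> w x \<le> M" and "x \<notin> \<Omega> \<Longrightarrow> v x \<le> g x"
  shows "v x \<le> perron_sup S \<Omega> g x"
proof -
  have "bdd_above ((\<lambda>w. w x) ` S)" using assms(2) by (auto intro!: bdd_aboveI[of _ M])
  then show ?thesis using cSUP_upper[OF assms(1), of "\<lambda>w. w x"] assms(3) by (simp add: perron_sup_def)
qed

lemma visc_sub_fun_upd:
  assumes sub: "visc_sub X A \<Omega> g u" and "u x \<le> c"
    and outside: "x \<notin> \<Omega> \<Longrightarrow> c \<le> g x"
    and inside: "\<And>\<psi>. x \<in> \<Omega> \<Longrightarrow> \<psi> \<in> X \<Longrightarrow> u(x := c) \<le> \<psi> \<Longrightarrow> A x \<psi> c \<le> 0"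
  shows "visc_sub X A \<Omega> g (u(x := c))"
proof -
  have "u \<le> u(x := c)" using \<open>u x \<le> c\<close> by (simp add: le_fun_def)
  then have "A y \<psi> (u y) \<le> 0" if "y \<in> \<Omega>" "\<psi> \<in> X" "u(x := c) \<le> \<psi>" for y \<psi>
    using sub that order_trans by (auto simp: visc_sub_def)
  then show ?thesis
    using sub outside inside by (auto simp: visc_sub_def Xbar_fun_upd)
qed

locale dpp_operator =
  fixes X :: "('a \<Rightarrow> real) set" and A :: "'a \<Rightarrow> ('a \<Rightarrow> real) \<Rightarrow> real \<Rightarrow> real"
  assumes antimono_test: "\<And>x \<phi>1 \<phi>2 s. \<phi>1 \<in> X \<Longrightarrow> \<phi>2 \<in> X \<Longrightarrow> \<phi>1 \<le> \<phi>2 \<Longrightarrow> A x \<phi>2 s \<le> A x \<phi>1 s"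
    and mono_value: "\<And>x \<phi> s1 s2. \<phi> \<in> X \<Longrightarrow> s1 \<le> s2 \<Longrightarrow> A x \<phi> s1 \<le> A x \<phi> s2"
    and ex1_zero: "\<And>x \<phi>. \<phi> \<in> X \<Longrightarrow> \<exists>!s. A x \<phi> s = 0"
begin

lemma dpp_operator_dual: "dpp_operator (uminus ` X) (dual_operator A)"
proof
  fix x \<phi>1 \<phi>2 s assume "\<phi>1 \<in> uminus ` X" "\<phi>2 \<in> uminus ` X" "\<phi>1 \<le> \<phi>2"
  then show "dual_operator A x \<phi>2 s \<le> dual_operator A x \<phi>1 s"
    using antimono_test[of "- \<phi>2" "- \<phi>1" x "- s"]
    by (simp add: dual_operator_def minus_image_eq_vimage)
next
  fix x \<phi> and s1 s2 :: real assume "\<phi> \<in> uminus ` X" "s1 \<le> s2"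
  then show "dual_operator A x \<phi> s1 \<le> dual_operator A x \<phi> s2"
    using mono_value[of "- \<phi>" "- s2" "- s1" x] by (simp add: dual_operator_def minus_image_eq_vimage)
next
  fix x \<phi> assume "\<phi> \<in> uminus ` X"
  then have "\<exists>!s. A x (- \<phi>) s = 0" using ex1_zero by (simp add: minus_image_eq_vimage)
  then have "\<exists>!s. A x (- \<phi>) (- s) = 0" by (metis minus_minus)
  then show "\<exists>!s. dual_operator A x \<phi> s = 0" by (simp add: dual_operator_def)
qed

lemma maximal_visc_sub_is_visc_sol:
  assumes sub: "visc_sub X A \<Omega> g u" and max: "\<And>w. visc_sub X A \<Omega> g w \<Longrightarrow> w \<le> u"
  shows "visc_sol X A \<Omega> g u"
proof -
  have "g x \<le> u x" if "x \<notin> \<Omega>" for x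
  proof (rule ccontr)
    assume "\<not> g x \<le> u x"
    then have "visc_sub X A \<Omega> g (u(x := g x))"
      using that by (intro visc_sub_fun_upd[OF sub]) auto
    with \<open>\<not> g x \<le> u x\<close> show False
      using max le_funD[of _ u x] by fastforce
  qed
  moreover have "0 \<le> A x \<phi> (u x)" if x: "x \<in> \<Omega>" and \<phi>: "\<phi> \<in> X" "\<phi> \<le> u" for x \<phi>
  proof (rule ccontr)
    assume neg: "\<not> 0 \<le> A x \<phi> (u x)"
    obtain s where s: "A x \<phi> s = 0" using ex1_zero[OF \<phi>(1)] by blast
    have "u x < s" using mono_value[OF \<phi>(1), of s "u x"] neg s by (metis not_less)
    have "A x \<psi> s \<le> 0" if "\<psi> \<in> X" "u(x := s) \<le> \<psi>" for \<psi>
    proof -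
      have "u \<le> u(x := s)" using \<open>u x < s\<close> by (simp add: le_fun_def)
      then have "\<phi> \<le> \<psi>" using \<phi>(2) that(2) by order
      then show ?thesis using antimono_test[OF \<phi>(1) that(1) \<open>\<phi> \<le> \<psi>\<close>, of x s] s by simp
    qed
    then have "visc_sub X A \<Omega> g (u(x := s))"
      using x \<open>u x < s\<close> by (intro visc_sub_fun_upd[OF sub]) auto
    with \<open>u x < s\<close> show False
      using max le_funD[of _ u x] by fastforce
  qed
  ultimately show ?thesis
    using sub by (auto simp: visc_sol_def visc_super_def visc_sub_def)
qed

lemma visc_sub_perron_sup:
  assumes S_sub: "\<And>v. v \<in> S \<Longrightarrow> visc_sub X A \<Omega> g v" and "v0 \<in> S"
    and S_bdd: "\<And>v x. v \<in> S \<Longrightarrow> v x \<le> M"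
    and g_bdd: "bounded (g ` (- \<Omega>))"
  shows "visc_sub X A \<Omega> g (perron_sup S \<Omega> g)"
proof -
  let ?u = "perron_sup S \<Omega> g"
  have "S \<noteq> {}" and bdd: "bdd_above ((\<lambda>v. v x) ` S)" for x
    using \<open>v0 \<in> S\<close> S_bdd by (auto intro!: bdd_aboveI[of _ M])
  have le_u: "v \<le> ?u" if "v \<in> S" for v
  proof (rule le_funI, rule perron_sup_upper[OF that S_bdd])
    show "\<And>x. x \<notin> \<Omega> \<Longrightarrow> v x \<le> g x" using S_sub[OF that] by (simp add: visc_sub_def)
  qed
  have "?u \<in> Xbar"
  proof -
    obtain B0 where B0: "\<And>x. \<bar>v0 x\<bar> \<le> B0"
      using S_sub[OF \<open>v0 \<in> S\<close>] by (auto simp: visc_sub_def Xbar_def bounded_real)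
    obtain Bg where Bg: "\<And>x. x \<notin> \<Omega> \<Longrightarrow> \<bar>g x\<bar> \<le> Bg"
      using g_bdd by (auto simp: bounded_real)
    have "\<bar>?u x\<bar> \<le> max \<bar>M\<bar> (max B0 Bg)" for x
    proof (cases "x \<in> \<Omega>")
      case True
      then have "?u x \<le> M"
        using \<open>S \<noteq> {}\<close> S_bdd by (auto simp: perron_sup_def intro: cSUP_least)
      moreover have "v0 x \<le> ?u x" using le_funD[OF le_u[OF \<open>v0 \<in> S\<close>]] .
      ultimately show ?thesis using B0[of x] by (auto simp: abs_le_iff le_max_iff_disj)
    next
      case False
      then show ?thesis using Bg[of x] by (simp add: perron_sup_def)
    qed
    then show ?thesis by (auto simp: Xbar_def bounded_real)
  qed
  moreover have "A x \<phi> (?u x) \<le> 0" if x: "x \<in> \<Omega>" and \<phi>: "\<phi> \<in> X" "?u \<le> \<phi>" for x \<phi>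
  proof (rule ccontr)
    assume neg: "\<not> A x \<phi> (?u x) \<le> 0"
    obtain s where s: "A x \<phi> s = 0" and s_unique: "\<And>t. A x \<phi> t = 0 \<Longrightarrow> t = s"
      using ex1_zero[OF \<phi>(1)] by blast
    have "s < ?u x" using mono_value[OF \<phi>(1), of "?u x" s] neg s by (metis not_less)
    then obtain v where v: "v \<in> S" "s < v x"
      using x less_cSUP_iff[OF \<open>S \<noteq> {}\<close> bdd] by (auto simp: perron_sup_def)
    have "v \<le> \<phi>" using \<phi>(2) le_u[OF v(1)] by order
    then have "A x \<phi> (v x) \<le> 0" using S_sub[OF v(1)] x \<phi>(1) by (auto simp: visc_sub_def)
    moreover have "0 \<le> A x \<phi> (v x)" using mono_value[OF \<phi>(1), of s "v x" x] v(2) s by simp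
    ultimately have "v x = s" by (intro s_unique antisym)
    with v(2) show False by simp
  qed
  moreover have "?u x \<le> g x" if "x \<notin> \<Omega>" for x
    using that by (simp add: perron_sup_def)
  ultimately show ?thesis unfolding visc_sub_def by blast
qed

lemma perron_sup_visc_sol:
  assumes "visc_sub X A \<Omega> g v0" and "\<And>v x. visc_sub X A \<Omega> g v \<Longrightarrow> v x \<le> M"
    and "bounded (g ` (- \<Omega>))"
  shows "visc_sol X A \<Omega> g (perron_sup {v. visc_sub X A \<Omega> g v} \<Omega> g)"
proof (rule maximal_visc_sub_is_visc_sol)
  let ?S = "{v. visc_sub X A \<Omega> g v}"
  show sub: "visc_sub X A \<Omega> g (perron_sup ?S \<Omega> g)"
    using assms by (intro visc_sub_perron_sup) auto
  fix w assume w: "visc_sub X A \<Omega> g w"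
  show "w \<le> perron_sup ?S \<Omega> g"
  proof (rule le_funI, rule perron_sup_upper)
    show "w \<in> ?S" and "\<And>v x. v \<in> ?S \<Longrightarrow> v x \<le> M" using w assms(2) by auto
    show "\<And>x. x \<notin> \<Omega> \<Longrightarrow> w x \<le> g x" using w by (simp add: visc_sub_def)
  qed
qed

lemma perron_inf_visc_sol:
  assumes "visc_super X A \<Omega> g v0" and "\<And>v x. visc_super X A \<Omega> g v \<Longrightarrow> M \<le> v x"
    and "bounded (g ` (- \<Omega>))"
  shows "visc_sol X A \<Omega> g (perron_inf {v. visc_super X A \<Omega> g v} \<Omega> g)"
proof -
  interpret dual: dpp_operator "uminus ` X" "dual_operator A" by (rule dpp_operator_dual)
  let ?S = "{v. visc_super X A \<Omega> g v}"
  let ?sub = "visc_sub (uminus ` X) (dual_operator A) \<Omega> (- g)"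
  have "uminus ` ?S = {w. ?sub w}"
    by (simp add: minus_image_eq_vimage visc_super_iff_visc_sub_dual)
  moreover have "visc_sol (uminus ` X) (dual_operator A) \<Omega> (- g) (perron_sup {w. ?sub w} \<Omega> (- g))"
  proof (rule dual.perron_sup_visc_sol)
    show "?sub (- v0)" using assms(1) by (simp add: visc_super_iff_visc_sub_dual)
    show "w x \<le> - M" if "?sub w" for w x
      using assms(2)[of "- w" x] that by (simp add: visc_super_iff_visc_sub_dual)
    show "bounded ((- g) ` (- \<Omega>))"
      using assms(3) uminus_bounded_comp[of g "- \<Omega>"] by (simp add: fun_Compl_def)
  qed
  ultimately have "visc_sol X A \<Omega> g (- perron_sup (uminus ` ?S) \<Omega> (- g))"
    using visc_sol_iff_visc_sol_dual[of X A \<Omega> g "- perron_sup (uminus ` ?S) \<Omega> (- g)"] by simp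
  then show ?thesis unfolding perron_inf_eq_uminus_perron_sup .
qed

end

theorem mainTheorem6:
  fixes X :: "('a::euclidean_space \<Rightarrow> real) set"
    and A :: "'a \<Rightarrow> ('a \<Rightarrow> real) \<Rightarrow> real \<Rightarrow> real"
    and \<Omega> :: "'a set" and g :: "'a \<Rightarrow> real"
  assumes X_sub: "X \<subseteq> Xbar"
    and \<Omega>_open: "open \<Omega>"
    and g_bdd: "bounded (g ` (- \<Omega>))"
    and A_a: "\<And>x \<phi>1 \<phi>2 s. \<phi>1 \<in> X \<Longrightarrow> \<phi>2 \<in> X \<Longrightarrow> \<phi>1 \<le> \<phi>2 \<Longrightarrow> A x \<phi>2 s \<le> A x \<phi>1 s"
    and A_b: "\<And>x \<phi> s1 s2. \<phi> \<in> X \<Longrightarrow> s1 \<le> s2 \<Longrightarrow> A x \<phi> s1 \<le> A x \<phi> s2"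
    and A_c: "\<And>x \<phi>. \<phi> \<in> X \<Longrightarrow> \<exists>!s. A x \<phi> s = 0"
  shows "((\<exists>v. visc_sub X A \<Omega> g v) \<and> (\<exists>M. \<forall>v. visc_sub X A \<Omega> g v \<longrightarrow> (\<forall>x. v x \<le> M))
           \<longrightarrow> visc_sol X A \<Omega> g
                 (\<lambda>x. if x \<in> \<Omega> then (SUP v\<in>{v. visc_sub X A \<Omega> g v}. v x) else g x))
       \<and> ((\<exists>v. visc_super X A \<Omega> g v) \<and> (\<exists>M. \<forall>v. visc_super X A \<Omega> g v \<longrightarrow> (\<forall>x. M \<le> v x))
           \<longrightarrow> visc_sol X A \<Omega> g
                 (\<lambda>x. if x \<in> \<Omega> then (INF v\<in>{v. visc_super X A \<Omega> g v}. v x) else g x))"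
proof -
  interpret dpp_operator X A using A_a A_b A_c by unfold_locales
  show ?thesis (is "(?sub_hyps \<longrightarrow> ?sub_sol) \<and> (?super_hyps \<longrightarrow> ?super_sol)")
  proof (intro conjI impI)
    assume ?sub_hyps
    then obtain v0 M where v0: "visc_sub X A \<Omega> g v0" and M: "\<forall>v. visc_sub X A \<Omega> g v \<longrightarrow> (\<forall>x. v x \<le> M)"
      by blast
    have "\<And>v x. visc_sub X A \<Omega> g v \<Longrightarrow> v x \<le> M" using M by blast
    then have "visc_sol X A \<Omega> g (perron_sup {v. visc_sub X A \<Omega> g v} \<Omega> g)"
      by (rule perron_sup_visc_sol[OF v0 _ g_bdd])
    then show ?sub_sol unfolding perron_sup_def[abs_def] .
  next
    assume ?super_hyps
    then obtain v0 M where v0: "visc_super X A \<Omega> g v0" and M: "\<forall>v. visc_super X A \<Omega> g v \<longrightarrow> (\<forall>x. M \<le> v x)"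
      by blast
    have "\<And>v x. visc_super X A \<Omega> g v \<Longrightarrow> M \<le> v x" using M by blast
    then have "visc_sol X A \<Omega> g (perron_inf {v. visc_super X A \<Omega> g v} \<Omega> g)"
      by (rule perron_inf_visc_sol[OF v0 _ g_bdd])
    then show ?super_sol unfolding perron_inf_def[abs_def] .
  qed
qed

end
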